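(* Let $\mathbf{A}$ be a real $n\times n$ matrix that is TJS (respectively, STJS). Let $P$ be a permutation of $[n]$ and $\mathbf{P}$ the corresponding permutation matrix. Then $\mathbf{P}\mathbf{A}\mathbf{P}^{-1}$ (obtained from $\mathbf{A}$ by renumbering both rows and columns according to $P$) is TJS (respectively, STJS). In particular, the matrix obtained from $\mathbf{A}$ by reversing the order of both its rows and its columns is TJS (respectively, STJS).
   Context: For $J\subseteq[m]$, $J^c=[m]\setminus J$, an $m\times m$ matrix $(a_{ik})$ is $J$-sign-symmetric if $a_{ik}\ge0$ on $(J\times J)\cup(J^c\times J^c)$ and $a_{ik}\le0$ on $(J\times J^c)\cup(J^c\times J)$; strictly $J$-sign-symmetric if strictly. $\mathbf{A}^{(j)}$ is the $j$th compound matrix (all $j\times j$ minors, index sets in lexicographic order). $\mathbf{A}$ is TJS (resp. STJS) if $\mathbf{A}$ is (strictly) $J$-sign-symmetric for some $J\subseteq[n]$ and every $\mathbf{A}^{(j)}$, $j=2,\ldots,n$, is (strictly) $J_j$-sign-symmetric for some subset $J_j$ of its index set. *)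

theory Defs
  imports "Jordan_Normal_Form.Determinant" "HOL-Combinatorics.Permutations"
begin

text \<open>Matrices are Jordan_Normal_Form matrices; indices are 0-based, so [n] is {..<n}.\<close>

definition sign_symm :: "'i set \<Rightarrow> 'i set \<Rightarrow> ('i \<Rightarrow> 'i \<Rightarrow> real) \<Rightarrow> bool" where
  "sign_symm I J M \<longleftrightarrow> J \<subseteq> I \<and>
     (\<forall>i\<in>I. \<forall>k\<in>I. ((i \<in> J) = (k \<in> J) \<longrightarrow> M i k \<ge> 0) \<and>
                    ((i \<in> J) \<noteq> (k \<in> J) \<longrightarrow> M i k \<le> 0))"

definition strict_sign_symm :: "'i set \<Rightarrow> 'i set \<Rightarrow> ('i \<Rightarrow> 'i \<Rightarrow> real) \<Rightarrow> bool" where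
  "strict_sign_symm I J M \<longleftrightarrow> J \<subseteq> I \<and>
     (\<forall>i\<in>I. \<forall>k\<in>I. ((i \<in> J) = (k \<in> J) \<longrightarrow> M i k > 0) \<and>
                    ((i \<in> J) \<noteq> (k \<in> J) \<longrightarrow> M i k < 0))"

definition minor :: "real mat \<Rightarrow> nat set \<Rightarrow> nat set \<Rightarrow> real" where
  "minor A \<alpha> \<beta> = det (mat (card \<alpha>) (card \<beta>)
      (\<lambda>(i,k). A $$ (sorted_list_of_set \<alpha> ! i, sorted_list_of_set \<beta> ! k)))"

text \<open>Rows/columns of the compound matrix are labelled by these subsets (the lexicographic
  numbering is a bijective relabelling, irrelevant for sign-symmetry).\<close>
definition compound_idx :: "nat \<Rightarrow> nat \<Rightarrow> nat set set" where
  "compound_idx n j = {\<alpha>. \<alpha> \<subseteq> {..<n} \<and> card \<alpha> = j}"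

definition compound :: "real mat \<Rightarrow> nat set \<Rightarrow> nat set \<Rightarrow> real" where
  "compound A \<alpha> \<beta> = minor A \<alpha> \<beta>"

definition TJS :: "nat \<Rightarrow> real mat \<Rightarrow> bool" where
  "TJS n A \<longleftrightarrow> A \<in> carrier_mat n n \<and>
     (\<exists>J. sign_symm {..<n} J (\<lambda>i k. A $$ (i,k))) \<and>
     (\<forall>j\<in>{2..n}. \<exists>Jj. sign_symm (compound_idx n j) Jj (compound A))"

definition STJS :: "nat \<Rightarrow> real mat \<Rightarrow> bool" where
  "STJS n A \<longleftrightarrow> A \<in> carrier_mat n n \<and>
     (\<exists>J. strict_sign_symm {..<n} J (\<lambda>i k. A $$ (i,k))) \<and>
     (\<forall>j\<in>{2..n}. \<exists>Jj. strict_sign_symm (compound_idx n j) Jj (compound A))"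

definition perm_mat :: "nat \<Rightarrow> (nat \<Rightarrow> nat) \<Rightarrow> real mat" where
  "perm_mat n p = mat n n (\<lambda>(i,j). if i = p j then 1 else 0)"

definition rev_mat :: "nat \<Rightarrow> real mat \<Rightarrow> real mat" where
  "rev_mat n A = mat n n (\<lambda>(i,k). A $$ (n - 1 - i, n - 1 - k))"

end

theory Submission
  imports Defs
begin

text \<open>Renumbering rows and columns by a permutation q turns the minor of A on rows q \<alpha> and
  columns q \<beta> into the minor on \<alpha>, \<beta> times \<open>\<epsilon>(\<alpha>) \<epsilon>(\<beta>)\<close>, where \<open>\<epsilon>(\<alpha>) = \<plusminus>1\<close> is the sign
  of the permutation sorting q \<alpha>. A weight of this product form preserves sign-symmetry:
  \<open>J\<close>-sign-symmetry of the compound of A becomes sign-symmetry of the new compound for the set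
  of those \<alpha> for which "q \<alpha> \<in> J" agrees with "\<open>\<epsilon>(\<alpha>) = 1\<close>". Conjugation by a permutation
  matrix and reversal of rows and columns are both such renumberings.\<close>

lemma sign_symm_reindex:
  assumes M: "sign_symm I J M" and g: "g ` I' \<subseteq> I" and s: "\<forall>x\<in>I'. s x \<noteq> 0"
    and N: "\<forall>x\<in>I'. \<forall>y\<in>I'. N x y = s x * s y * M (g x) (g y)"
  shows "sign_symm I' {x\<in>I'. (g x \<in> J) = (s x > 0)} N"
  unfolding sign_symm_def
proof (intro conjI ballI impI)
  fix x y assume x: "x \<in> I'" and y: "y \<in> I'"
  let ?J' = "{x\<in>I'. (g x \<in> J) = (s x > 0)}"
  have same: "((x \<in> ?J') = (y \<in> ?J')) = (((g x \<in> J) = (g y \<in> J)) = ((s x > 0) = (s y > 0)))"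
    using x y by auto
  have "s x \<noteq> 0" "s y \<noteq> 0" using s x y by auto
  then have weight: "s x * s y > 0 \<longleftrightarrow> (s x > 0) = (s y > 0)"
    by (cases "s x > 0"; cases "s y > 0") (auto simp: zero_less_mult_iff)
  have "(g x \<in> J) = (g y \<in> J) \<Longrightarrow> M (g x) (g y) \<ge> 0"
    and "(g x \<in> J) \<noteq> (g y \<in> J) \<Longrightarrow> M (g x) (g y) \<le> 0"
    using M g x y unfolding sign_symm_def by blast+
  then show "(x \<in> ?J') = (y \<in> ?J') \<Longrightarrow> N x y \<ge> 0" and "(x \<in> ?J') \<noteq> (y \<in> ?J') \<Longrightarrow> N x y \<le> 0"
    unfolding same N[rule_format, OF x y]
    using weight \<open>s x \<noteq> 0\<close> \<open>s y \<noteq> 0\<close>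
    by (smt (verit) mult_nonneg_nonneg mult_nonpos_nonpos mult_nonneg_nonpos mult_nonpos_nonneg)+
qed auto

lemma strict_sign_symm_reindex:
  assumes M: "strict_sign_symm I J M" and g: "g ` I' \<subseteq> I" and s: "\<forall>x\<in>I'. s x \<noteq> 0"
    and N: "\<forall>x\<in>I'. \<forall>y\<in>I'. N x y = s x * s y * M (g x) (g y)"
  shows "strict_sign_symm I' {x\<in>I'. (g x \<in> J) = (s x > 0)} N"
  unfolding strict_sign_symm_def
proof (intro conjI ballI impI)
  fix x y assume x: "x \<in> I'" and y: "y \<in> I'"
  let ?J' = "{x\<in>I'. (g x \<in> J) = (s x > 0)}"
  have same: "((x \<in> ?J') = (y \<in> ?J')) = (((g x \<in> J) = (g y \<in> J)) = ((s x > 0) = (s y > 0)))"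
    using x y by auto
  have "s x \<noteq> 0" "s y \<noteq> 0" using s x y by auto
  then have weight: "s x * s y > 0 \<longleftrightarrow> (s x > 0) = (s y > 0)"
    by (cases "s x > 0"; cases "s y > 0") (auto simp: zero_less_mult_iff)
  have "(g x \<in> J) = (g y \<in> J) \<Longrightarrow> M (g x) (g y) > 0"
    and "(g x \<in> J) \<noteq> (g y \<in> J) \<Longrightarrow> M (g x) (g y) < 0"
    using M g x y unfolding strict_sign_symm_def by blast+
  then show "(x \<in> ?J') = (y \<in> ?J') \<Longrightarrow> N x y > 0" and "(x \<in> ?J') \<noteq> (y \<in> ?J') \<Longrightarrow> N x y < 0"
    unfolding same N[rule_format, OF x y]
    using weight \<open>s x \<noteq> 0\<close> \<open>s y \<noteq> 0\<close>
    by (smt (verit) mult_pos_pos mult_neg_neg mult_pos_neg mult_neg_pos)+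
qed auto

lemma det_permute_rows_cols:
  assumes X: "X \<in> carrier_mat n n" and f: "f permutes {..<n}" and g: "g permutes {..<n}"
  shows "det (mat n n (\<lambda>(i,k). X $$ (f i, g k))) = signof f * signof g * det X"
proof -
  define Y where "Y = mat n n (\<lambda>(i,k). X $$ (i, g k))"
  have Y: "Y \<in> carrier_mat n n" unfolding Y_def by simp
  have f': "f permutes {0..<n}" and g': "g permutes {0..<n}"
    using f g by (simp_all add: lessThan_atLeast0)
  have fg: "f i < n" "g i < n" if "i < n" for i
    using that permutes_in_image[OF f] permutes_in_image[OF g] by auto
  then have "mat n n (\<lambda>(i,k). X $$ (f i, g k)) = mat n n (\<lambda>(i,k). Y $$ (f i, k))"
    by (intro cong_mat) (auto simp: Y_def)
  then have "det (mat n n (\<lambda>(i,k). X $$ (f i, g k))) = signof f * det Y"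
    using det_permute_rows[OF Y f'] by simp
  moreover have "transpose_mat Y = mat n n (\<lambda>(i,k). transpose_mat X $$ (g i, k))"
    using fg X by (intro eq_matI) (auto simp: Y_def)
  then have "det Y = signof g * det X"
    using det_transpose[OF Y] det_transpose[OF X] det_permute_rows[of "transpose_mat X" n g] g' X
    by auto
  ultimately show ?thesis by simp
qed

definition reindex_mat :: "nat \<Rightarrow> (nat \<Rightarrow> nat) \<Rightarrow> real mat \<Rightarrow> real mat" where
  "reindex_mat n q A = mat n n (\<lambda>(i,k). A $$ (q i, q k))"

definition sorting_perm :: "(nat \<Rightarrow> nat) \<Rightarrow> nat set \<Rightarrow> nat \<Rightarrow> nat" where
  "sorting_perm q a = (SOME f. f permutes {..<card a} \<and>
      permute_list f (sorted_list_of_set (q ` a)) = map q (sorted_list_of_set a))"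

definition reorder_sign :: "(nat \<Rightarrow> nat) \<Rightarrow> nat set \<Rightarrow> real" where
  "reorder_sign q a = signof (sorting_perm q a)"

lemma reorder_sign_nonzero: "reorder_sign q a \<noteq> 0"
  by (simp add: reorder_sign_def sign_def)

lemma sorting_perm:
  assumes "inj_on q a" and "finite a"
  shows "sorting_perm q a permutes {..<card a}"
    and "\<And>i. i < card a \<Longrightarrow>
           q (sorted_list_of_set a ! i) = sorted_list_of_set (q ` a) ! sorting_perm q a i"
proof -
  have card: "card (q ` a) = card a" using card_image[OF assms(1)] .
  have "mset (map q (sorted_list_of_set a)) = mset (sorted_list_of_set (q ` a))"
    using assms by (intro set_eq_iff_mset_eq_distinct[THEN iffD1]) (auto simp: distinct_map)
  then obtain f where "f permutes {..<length (sorted_list_of_set (q ` a))}"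
      "permute_list f (sorted_list_of_set (q ` a)) = map q (sorted_list_of_set a)"
    by (rule mset_eq_permutation)
  then have "\<exists>f. f permutes {..<card a} \<and>
      permute_list f (sorted_list_of_set (q ` a)) = map q (sorted_list_of_set a)"
    using card by auto
  then have perm: "sorting_perm q a permutes {..<card a}"
    and sorts: "permute_list (sorting_perm q a) (sorted_list_of_set (q ` a)) = map q (sorted_list_of_set a)"
    unfolding sorting_perm_def by (metis (mono_tags, lifting) someI_ex)+
  show "sorting_perm q a permutes {..<card a}" by (fact perm)
  fix i assume i: "i < card a"
  have "q (sorted_list_of_set a ! i) = permute_list (sorting_perm q a) (sorted_list_of_set (q ` a)) ! i"
    using i sorts by simp
  also have "\<dots> = sorted_list_of_set (q ` a) ! sorting_perm q a i"
    using i card perm by (subst permute_list_nth) auto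
  finally show "q (sorted_list_of_set a ! i) = sorted_list_of_set (q ` a) ! sorting_perm q a i" .
qed

lemma sorted_list_of_set_nth_mem:
  assumes "finite a" and "i < card a"
  shows "sorted_list_of_set a ! i \<in> a"
  using assms by (metis nth_mem sorted_list_of_set.length_sorted_key_list_of_set
      sorted_list_of_set.set_sorted_key_list_of_set)

lemma minor_reindex_mat:
  assumes q: "inj_on q {..<n}" and a: "a \<subseteq> {..<n}" and b: "b \<subseteq> {..<n}"
    and ab: "card a = card b"
  shows "minor (reindex_mat n q A) a b = reorder_sign q a * reorder_sign q b * minor A (q ` a) (q ` b)"
proof -
  have fin: "finite a" "finite b" using a b finite_subset by blast+
  have inj: "inj_on q a" "inj_on q b" using q a b inj_on_subset by blast+
  note fa = sorting_perm[OF inj(1) fin(1)] and fb = sorting_perm[OF inj(2) fin(2)]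
  define j where "j = card a"
  define X where "X = mat j j (\<lambda>(i,k). A $$ (sorted_list_of_set (q ` a) ! i, sorted_list_of_set (q ` b) ! k))"
  have "minor (reindex_mat n q A) a b = det (mat j j (\<lambda>(i,k). X $$ (sorting_perm q a i, sorting_perm q b k)))"
    unfolding minor_def
  proof (intro arg_cong[where f = det] cong_mat)
    fix i k assume i: "i < card a" and k: "k < card b"
    have "sorted_list_of_set a ! i < n" "sorted_list_of_set b ! k < n"
      using sorted_list_of_set_nth_mem fin i k a b by blast+
    moreover have "sorting_perm q a i < j" "sorting_perm q b k < j"
      using fa(1) fb(1) i k permutes_in_image ab unfolding j_def by fastforce+
    ultimately show "(\<lambda>(i,k). reindex_mat n q A $$ (sorted_list_of_set a ! i, sorted_list_of_set b ! k)) (i,k) =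
        (\<lambda>(i,k). X $$ (sorting_perm q a i, sorting_perm q b k)) (i,k)"
      using i k fa(2) fb(2) ab unfolding X_def reindex_mat_def by auto
  qed (auto simp: j_def ab)
  also have "\<dots> = reorder_sign q a * reorder_sign q b * det X"
    unfolding reorder_sign_def using fa(1) fb(1) ab
    by (intro det_permute_rows_cols) (auto simp: X_def j_def)
  also have "det X = minor A (q ` a) (q ` b)"
    unfolding minor_def X_def j_def using card_image[OF inj(1)] card_image[OF inj(2)] ab by simp
  finally show ?thesis .
qed

lemma image_compound_idx:
  assumes "bij_betw q {..<n} {..<n}" and "a \<in> compound_idx n j"
  shows "q ` a \<in> compound_idx n j"
proof -
  have a: "a \<subseteq> {..<n}" "card a = j" using assms(2) by (auto simp: compound_idx_def)
  then have "q ` a \<subseteq> {..<n}" using assms(1) by (auto simp: bij_betw_def)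
  moreover have "card (q ` a) = j"
    using a card_image inj_on_subset[OF bij_betw_imp_inj_on[OF assms(1)]] by metis
  ultimately show ?thesis by (simp add: compound_idx_def)
qed

lemma compound_reindex_mat:
  assumes q: "bij_betw q {..<n} {..<n}"
  shows "\<forall>a\<in>compound_idx n j. \<forall>b\<in>compound_idx n j. compound (reindex_mat n q A) a b =
           reorder_sign q a * reorder_sign q b * compound A (q ` a) (q ` b)"
  using minor_reindex_mat[OF bij_betw_imp_inj_on[OF q]]
  unfolding compound_def compound_idx_def by auto

lemma sign_symm_reindex_mat:
  assumes q: "q ` {..<n} \<subseteq> {..<n}" and J: "sign_symm {..<n} J (\<lambda>i k. A $$ (i,k))"
  shows "sign_symm {..<n} {i\<in>{..<n}. q i \<in> J} (\<lambda>i k. reindex_mat n q A $$ (i,k))"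
  using sign_symm_reindex[OF J q, where s = "\<lambda>_. 1" and N = "\<lambda>i k. reindex_mat n q A $$ (i,k)"]
  by (simp add: reindex_mat_def)

lemma strict_sign_symm_reindex_mat:
  assumes q: "q ` {..<n} \<subseteq> {..<n}" and J: "strict_sign_symm {..<n} J (\<lambda>i k. A $$ (i,k))"
  shows "strict_sign_symm {..<n} {i\<in>{..<n}. q i \<in> J} (\<lambda>i k. reindex_mat n q A $$ (i,k))"
  using strict_sign_symm_reindex[OF J q, where s = "\<lambda>_. 1" and N = "\<lambda>i k. reindex_mat n q A $$ (i,k)"]
  by (simp add: reindex_mat_def)

lemma sign_symm_compound_reindex_mat:
  assumes q: "bij_betw q {..<n} {..<n}" and J: "sign_symm (compound_idx n j) J (compound A)"
  shows "sign_symm (compound_idx n j) {a\<in>compound_idx n j. (q ` a \<in> J) = (reorder_sign q a > 0)}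
           (compound (reindex_mat n q A))"
proof -
  have "(`) q ` compound_idx n j \<subseteq> compound_idx n j"
    using image_compound_idx[OF q] by blast
  then show ?thesis
    using sign_symm_reindex[OF J _ _ compound_reindex_mat[OF q]] reorder_sign_nonzero by blast
qed

lemma strict_sign_symm_compound_reindex_mat:
  assumes q: "bij_betw q {..<n} {..<n}" and J: "strict_sign_symm (compound_idx n j) J (compound A)"
  shows "strict_sign_symm (compound_idx n j) {a\<in>compound_idx n j. (q ` a \<in> J) = (reorder_sign q a > 0)}
           (compound (reindex_mat n q A))"
proof -
  have "(`) q ` compound_idx n j \<subseteq> compound_idx n j"
    using image_compound_idx[OF q] by blast
  then show ?thesis
    using strict_sign_symm_reindex[OF J _ _ compound_reindex_mat[OF q]] reorder_sign_nonzero by blast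
qed

lemma reindex_mat_carrier [simp]: "reindex_mat n q A \<in> carrier_mat n n"
  by (simp add: reindex_mat_def)

lemma TJS_reindex_mat:
  assumes q: "bij_betw q {..<n} {..<n}" and A: "TJS n A"
  shows "TJS n (reindex_mat n q A)"
proof -
  have "q ` {..<n} \<subseteq> {..<n}" using q by (simp add: bij_betw_def)
  moreover obtain J where "sign_symm {..<n} J (\<lambda>i k. A $$ (i,k))"
    using A unfolding TJS_def by blast
  ultimately have "\<exists>J. sign_symm {..<n} J (\<lambda>i k. reindex_mat n q A $$ (i,k))"
    using sign_symm_reindex_mat by blast
  moreover have "\<exists>Jj. sign_symm (compound_idx n j) Jj (compound (reindex_mat n q A))"
    if "j \<in> {2..n}" for j
    using A that sign_symm_compound_reindex_mat[OF q] unfolding TJS_def by blast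
  ultimately show ?thesis unfolding TJS_def by simp
qed

lemma STJS_reindex_mat:
  assumes q: "bij_betw q {..<n} {..<n}" and A: "STJS n A"
  shows "STJS n (reindex_mat n q A)"
proof -
  have "q ` {..<n} \<subseteq> {..<n}" using q by (simp add: bij_betw_def)
  moreover obtain J where "strict_sign_symm {..<n} J (\<lambda>i k. A $$ (i,k))"
    using A unfolding STJS_def by blast
  ultimately have "\<exists>J. strict_sign_symm {..<n} J (\<lambda>i k. reindex_mat n q A $$ (i,k))"
    using strict_sign_symm_reindex_mat by blast
  moreover have "\<exists>Jj. strict_sign_symm (compound_idx n j) Jj (compound (reindex_mat n q A))"
    if "j \<in> {2..n}" for j
    using A that strict_sign_symm_compound_reindex_mat[OF q] unfolding STJS_def by blast
  ultimately show ?thesis unfolding STJS_def by simp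
qed

lemma perm_mat_mult_left:
  assumes p: "p permutes {..<n}" and X: "X \<in> carrier_mat n m" and i: "i < n" and k: "k < m"
  shows "(perm_mat n p * X) $$ (i,k) = X $$ (Hilbert_Choice.inv p i, k)"
proof -
  have "(perm_mat n p * X) $$ (i,k) = (\<Sum>j\<in>{0..<n}. (if i = p j then 1 else 0) * X $$ (j,k))"
    using X i k by (simp add: perm_mat_def scalar_prod_def)
  also have "\<dots> = (\<Sum>j\<in>{0..<n}. if j = Hilbert_Choice.inv p i then X $$ (j,k) else 0)"
    using p by (intro sum.cong) (auto simp: permutes_inverses)
  also have "\<dots> = X $$ (Hilbert_Choice.inv p i, k)"
    using p i by (simp add: permutes_in_image permutes_inv lessThan_atLeast0[symmetric])
  finally show ?thesis .
qed

lemma perm_mat_mult_right: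
  assumes p: "p permutes {..<n}" and X: "X \<in> carrier_mat m n" and i: "i < m" and k: "k < n"
  shows "(X * perm_mat n p) $$ (i,k) = X $$ (i, p k)"
proof -
  have "(X * perm_mat n p) $$ (i,k) = (\<Sum>j\<in>{0..<n}. X $$ (i,j) * (if j = p k then 1 else 0))"
    using X i k by (simp add: perm_mat_def scalar_prod_def)
  also have "\<dots> = (\<Sum>j\<in>{0..<n}. if j = p k then X $$ (i,j) else 0)"
    by (intro sum.cong) auto
  also have "\<dots> = X $$ (i, p k)"
    using p k by (simp add: permutes_in_image lessThan_atLeast0[symmetric])
  finally show ?thesis .
qed

lemma perm_mat_inv_mult:
  assumes p: "p permutes {..<n}"
  shows "perm_mat n (Hilbert_Choice.inv p) * perm_mat n p = 1\<^sub>m n"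
proof (rule eq_matI)
  fix i k assume "i < dim_row (1\<^sub>m n)" and "k < dim_col (1\<^sub>m n)"
  then have i: "i < n" and k: "k < n" by auto
  have "(perm_mat n (Hilbert_Choice.inv p) * perm_mat n p) $$ (i,k) = perm_mat n p $$ (p i, k)"
    using perm_mat_mult_left[OF permutes_inv[OF p] _ i k] p
    by (simp add: perm_mat_def inv_inv_eq permutes_bij)
  also have "\<dots> = 1\<^sub>m n $$ (i,k)"
    using i k permutes_in_image[OF p] permutes_inj[OF p] by (auto simp: perm_mat_def inj_eq)
  finally show "(perm_mat n (Hilbert_Choice.inv p) * perm_mat n p) $$ (i,k) = 1\<^sub>m n $$ (i,k)" .
qed (auto simp: perm_mat_def)

lemma perm_mat_conj_eq_reindex_mat:
  assumes A: "A \<in> carrier_mat n n" and p: "p permutes {..<n}"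
    and Q: "Q \<in> carrier_mat n n" and PQ: "perm_mat n p * Q = 1\<^sub>m n"
  shows "perm_mat n p * A * Q = reindex_mat n (Hilbert_Choice.inv p) A"
proof -
  let ?P = "perm_mat n p" and ?P' = "perm_mat n (Hilbert_Choice.inv p)"
  have P: "?P \<in> carrier_mat n n" and P': "?P' \<in> carrier_mat n n" by (auto simp: perm_mat_def)
  have "Q = (?P' * ?P) * Q" using perm_mat_inv_mult[OF p] Q by simp
  also have "\<dots> = ?P'" using assoc_mult_mat[OF P' P Q] PQ P' by simp
  finally have Q_eq: "Q = ?P'" .
  have ip: "Hilbert_Choice.inv p permutes {..<n}" using permutes_inv[OF p] .
  show ?thesis unfolding Q_eq
  proof (rule eq_matI)
    fix i k
    assume "i < dim_row (reindex_mat n (Hilbert_Choice.inv p) A)"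
      and "k < dim_col (reindex_mat n (Hilbert_Choice.inv p) A)"
    then have i: "i < n" and k: "k < n" by (auto simp: reindex_mat_def)
    have "(?P * A * ?P') $$ (i,k) = (?P * A) $$ (i, Hilbert_Choice.inv p k)"
      using perm_mat_mult_right[OF ip _ i k] P A by simp
    also have "\<dots> = A $$ (Hilbert_Choice.inv p i, Hilbert_Choice.inv p k)"
      using perm_mat_mult_left[OF p A i] permutes_in_image[OF ip] k by simp
    finally show "(?P * A * ?P') $$ (i,k) = reindex_mat n (Hilbert_Choice.inv p) A $$ (i,k)"
      using i k by (simp add: reindex_mat_def)
  qed (use P A P' in \<open>auto simp: reindex_mat_def\<close>)
qed

lemma bij_betw_reverse: "bij_betw (\<lambda>i. n - 1 - i) {..<n} {..<(n::nat)}"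
  by (rule bij_betw_byWitness[where f' = "\<lambda>i. n - 1 - i"]) auto

lemma rev_mat_eq_reindex_mat: "rev_mat n A = reindex_mat n (\<lambda>i. n - 1 - i) A"
  unfolding rev_mat_def reindex_mat_def ..

theorem proposition30:
  fixes A Q :: "real mat" and n :: nat and p :: "nat \<Rightarrow> nat"
  assumes "A \<in> carrier_mat n n"
    and "p permutes {..<n}"
    and "Q \<in> carrier_mat n n"
    and "perm_mat n p * Q = 1\<^sub>m n"
  shows "(TJS n A \<longrightarrow> TJS n (perm_mat n p * A * Q) \<and> TJS n (rev_mat n A)) \<and>
         (STJS n A \<longrightarrow> STJS n (perm_mat n p * A * Q) \<and> STJS n (rev_mat n A))"
proof -
  have "bij_betw (Hilbert_Choice.inv p) {..<n} {..<n}"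
    using permutes_imp_bij[OF permutes_inv[OF assms(2)]] .
  then show ?thesis
    unfolding perm_mat_conj_eq_reindex_mat[OF assms] rev_mat_eq_reindex_mat
    using TJS_reindex_mat STJS_reindex_mat bij_betw_reverse by blast
qed

end
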